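(* Let $m,n$ be nonnegative integers with $0\leqslant m\leqslant n$, let $\varepsilon\in\{+1,-1\}$, and let $z\in\mathbb{C}\setminus(-\infty,1]$. Then \begin{align*} \frac{\mathrm{d}^{m}}{\mathrm{d}z^{m}}\bigl[P_{n}(z)\ln(z+\varepsilon)\bigr] &= \frac{(2m)!}{2^{m}m!}C_{n-m}^{(m+1/2)}(z)\ln(z+\varepsilon) -\frac{(2m)!}{2^{m}m!}[\psi(n+m+1)-2\psi(n+1)+\psi(n-m+1)]C_{n-m}^{(m+1/2)}(z)\\ &\quad -\frac{\varepsilon^{n+m}}{2^{m}}\sum_{k=0}^{n-m}\varepsilon^{k}\frac{(k+n+m)!\,\psi(k+m+1)}{k!\,(k+m)!\,(n-m-k)!}\left(\frac{z-\varepsilon}{2}\right)^{k}\\ &\quad +\varepsilon^{n}\frac{(n+m)!}{(n-m)!}(z+\varepsilon)^{-m}\sum_{k=0}^{n}\varepsilon^{k}\frac{(k+n)!\,\psi(k+m+1)}{k!\,(k+m)!\,(n-k)!}\left(\frac{z-\varepsilon}{2}\right)^{k}. \end{align*}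
   Context: $P_n(z)$ denotes the Legendre polynomial of degree $n$. $C_{j}^{(\alpha)}(z)$ denotes the Gegenbauer (ultraspherical) polynomial of degree $j$ and parameter $\alpha$. $\psi(\zeta)=\Gamma'(\zeta)/\Gamma(\zeta)$ is the digamma function. The complex plane is cut along the real axis from $-\infty$ to $+1$; for $z\in\mathbb{C}\setminus(-\infty,1]$, $\ln(z\pm1)$ denotes the principal branch of the logarithm. The case $\varepsilon=+1$ concerns $\ln(z+1)$ and the case $\varepsilon=-1$ concerns $\ln(z-1)$. *)

theory Defs
  imports "HOL-Analysis.Analysis"
begin

definition legendreP :: "nat \<Rightarrow> complex \<Rightarrow> complex" where
  "legendreP n z = (\<Sum>k\<le>n div 2. (-1)^k * of_nat (fact (2*n - 2*k))
      / (2^n * of_nat (fact k) * of_nat (fact (n - k)) * of_nat (fact (n - 2*k))) * z^(n - 2*k))"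

text \<open>Gegenbauer polynomial C_j^(alpha): sum over k of (-1)^k Gamma(j-k+alpha)/(Gamma(alpha) k! (j-2k)!) (2z)^(j-2k),
  with Gamma(j-k+alpha)/Gamma(alpha) written as the Pochhammer symbol (alpha)_(j-k).\<close>
definition gegenbauerC :: "nat \<Rightarrow> complex \<Rightarrow> complex \<Rightarrow> complex" where
  "gegenbauerC j \<alpha> z = (\<Sum>k\<le>j div 2. (-1)^k * pochhammer \<alpha> (j - k)
      / (of_nat (fact k) * of_nat (fact (j - 2*k))) * (2*z)^(j - 2*k))"

end

theory Submission
  imports Defs "HOL-Computational_Algebra.Polynomial"
begin

text \<open>
  The m-th derivative of P_n is ((2m)!/(2^m m!)) C_(n-m)^(m+1/2), by the derivative rule for
  Gegenbauer polynomials. Murphy's formula P_n(z) = e^n \<Sum>k (n+k)!/(k!^2 (n-k)!) ((e z - 1)/2)^k,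
  obtained from uniqueness of polynomial solutions of the Legendre equation, gives a second
  expression for this derivative as a polynomial in (e z - 1)/2 divided by (z + e)^m.
  The claimed right-hand side R_m equals P_n(z) Ln(z + e) for m = 0 and satisfies R_m' = R_(m+1):
  coefficientwise recurrences of the three polynomial families, together with
  Digamma (x + 1) = Digamma x + 1/x, account for every term.
\<close>

lemma fact_Suc_complex: "(fact (Suc j) :: complex) = of_nat (j + 1) * fact j"
  by simp

section \<open>Legendre polynomials as Gegenbauer polynomials\<close>

lemma pochhammer_half: "pochhammer (1/2 :: complex) j = fact (2*j) / (4^j * fact j)"
proof -
  have "pochhammer (2 * (1/2 :: complex)) (2*j)
      = of_nat (2^(2*j)) * pochhammer (1/2) j * pochhammer (1/2 + 1/2) j"
    by (rule pochhammer_double)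
  then have "fact (2*j) = (4 :: complex)^j * pochhammer (1/2) j * fact j"
    by (simp add: pochhammer_fact[symmetric] power_mult)
  then show ?thesis by (simp add: field_simps)
qed

lemma legendreP_eq_gegenbauerC: "legendreP n z = gegenbauerC n (1/2) z"
  unfolding legendreP_def gegenbauerC_def
proof (rule sum.cong)
  fix k assume "k \<in> {..n div 2}"
  then have e: "2*n - 2*k = 2*(n - k)" and "2*(n - k) = n + (n - 2*k)" by auto
  then have "(4 :: complex)^(n - k) = 2^n * 2^(n - 2*k)"
    by (metis power_add power_mult numeral_Bit0_eq_double power2_eq_square)
  with e show "(-1)^k * of_nat (fact (2*n - 2*k)) / (2^n * of_nat (fact k) * of_nat (fact (n - k))
        * of_nat (fact (n - 2*k))) * z^(n - 2*k)
      = (-1)^k * pochhammer (1/2) (n - k) / (of_nat (fact k) * of_nat (fact (n - 2*k))) * (2*z)^(n - 2*k)"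
    by (simp add: pochhammer_half field_simps)
qed simp

lemma has_field_derivative_gegenbauerC:
  "(gegenbauerC (Suc j) a has_field_derivative 2*a * gegenbauerC j (a + 1) z) (at z)"
proof -
  define c where
    "c k = (-1)^k * pochhammer a (Suc j - k) / (of_nat (fact k) * of_nat (fact (Suc j - 2*k)))" for k
  have "((\<lambda>z. c k * (2*z)^(Suc j - 2*k)) has_field_derivative
      c k * (of_nat (Suc j - 2*k) * (2 * (2*z)^(Suc j - 2*k - 1)))) (at z)" for k
    by (rule derivative_eq_intros refl | simp)+
  then have "(gegenbauerC (Suc j) a has_field_derivative
      (\<Sum>k\<le>Suc j div 2. c k * (of_nat (Suc j - 2*k) * (2 * (2*z)^(Suc j - 2*k - 1))))) (at z)"
    unfolding gegenbauerC_def c_def[symmetric] by (rule DERIV_sum)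
  also have "(\<Sum>k\<le>Suc j div 2. c k * (of_nat (Suc j - 2*k) * (2 * (2*z)^(Suc j - 2*k - 1))))
      = (\<Sum>k\<le>j div 2. c k * (of_nat (Suc j - 2*k) * (2 * (2*z)^(Suc j - 2*k - 1))))"
    by (rule sum.mono_neutral_right) auto
  also have "\<dots> = 2*a * gegenbauerC j (a + 1) z"
    unfolding gegenbauerC_def sum_distrib_left
  proof (rule sum.cong)
    fix k assume "k \<in> {..j div 2}"
    then have e: "Suc j - k = Suc (j - k)" "Suc j - 2*k = Suc (j - 2*k)" by auto
    define S :: complex where "S = of_nat (Suc (j - 2*k))"
    have "S \<noteq> 0" and fS: "of_nat (fact (Suc (j - 2*k))) = S * of_nat (fact (j - 2*k))"
      by (simp_all only: S_def of_nat_eq_0_iff Suc_neq_Zero not_False_eq_True fact_Suc of_nat_mult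
          of_nat_id)
    show "c k * (of_nat (Suc j - 2*k) * (2 * (2*z)^(Suc j - 2*k - 1)))
        = 2*a * ((-1)^k * pochhammer (a + 1) (j - k) / (of_nat (fact k) * of_nat (fact (j - 2*k)))
          * (2*z)^(j - 2*k))"
      unfolding c_def e fS S_def[symmetric] using \<open>S \<noteq> 0\<close>
      by (simp add: pochhammer_rec field_simps)
  qed simp
  finally show ?thesis .
qed

lemma double_fact_ratio_Suc:
  "(of_nat (fact (2 * Suc m)) / (2^Suc m * of_nat (fact (Suc m))) :: complex)
     = of_nat (fact (2*m)) / (2^m * of_nat (fact m)) * (2 * of_nat m + 1)"
proof -
  define N :: complex where "N = of_nat m + 1"
  have "N \<noteq> 0" unfolding N_def by (metis add.commute of_nat_Suc of_nat_neq_0)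
  have "2 * Suc m = Suc (Suc (2*m))" by simp
  then have "(fact (2 * Suc m) :: complex) = 2 * N * ((2 * of_nat m + 1) * fact (2*m))"
    by (simp only: fact_Suc_complex) (simp add: N_def algebra_simps)
  moreover have "(fact (Suc m) :: complex) = N * fact m" by (simp add: N_def)
  ultimately show ?thesis using \<open>N \<noteq> 0\<close> by (simp add: field_simps)
qed

definition legendre_deriv :: "nat \<Rightarrow> nat \<Rightarrow> complex \<Rightarrow> complex" where
  "legendre_deriv n m z
     = of_nat (fact (2*m)) / (2^m * of_nat (fact m)) * gegenbauerC (n - m) (of_nat m + 1/2) z"

lemma legendre_deriv_0: "legendre_deriv n 0 z = legendreP n z"
  by (simp add: legendre_deriv_def legendreP_eq_gegenbauerC)

lemma has_field_derivative_legendre_deriv: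
  assumes "m < n"
  shows "(legendre_deriv n m has_field_derivative legendre_deriv n (Suc m) z) (at z)"
proof -
  have "n - m = Suc (n - Suc m)" using assms by simp
  then have "(gegenbauerC (n - m) (of_nat m + 1/2) has_field_derivative
      2 * (of_nat m + 1/2) * gegenbauerC (n - Suc m) (of_nat m + 1/2 + 1) z) (at z)"
    by (simp only: has_field_derivative_gegenbauerC)
  moreover have "of_nat m + 1/2 + 1 = (of_nat (Suc m) + 1/2 :: complex)" by simp
  ultimately have "(gegenbauerC (n - m) (of_nat m + 1/2) has_field_derivative
      (2 * of_nat m + 1) * gegenbauerC (n - Suc m) (of_nat (Suc m) + 1/2) z) (at z)"
    by (simp add: algebra_simps)
  from DERIV_cmult[OF this, of "of_nat (fact (2*m)) / (2^m * of_nat (fact m))"]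
  have "(legendre_deriv n m has_field_derivative of_nat (fact (2*m)) / (2^m * of_nat (fact m))
      * ((2 * of_nat m + 1) * gegenbauerC (n - Suc m) (of_nat (Suc m) + 1/2) z)) (at z)"
    by (simp only: legendre_deriv_def[abs_def])
  then show ?thesis
    unfolding legendre_deriv_def[of n "Suc m"] double_fact_ratio_Suc by (metis mult.assoc)
qed

definition poly_upto :: "(nat \<Rightarrow> 'a::comm_semiring_1) \<Rightarrow> nat \<Rightarrow> 'a poly" where
  "poly_upto c N = (\<Sum>k\<le>N. monom (c k) k)"

lemma coeff_poly_upto: "coeff (poly_upto c N) k = (if k \<le> N then c k else 0)"
  by (simp add: poly_upto_def coeff_sum)

lemma poly_poly_upto: "poly (poly_upto c N) x = (\<Sum>k\<le>N. c k * x ^ k)"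
  by (simp add: poly_upto_def poly_sum poly_monom)

lemma poly_poly_upto_scaled: "poly (poly_upto c N) (e * x) = (\<Sum>k = 0..N. e^k * c k * x^k)"
  by (simp add: poly_poly_upto atLeast0AtMost power_mult_distrib mult_ac)

lemma degree_poly_upto: "degree (poly_upto c N) \<le> N"
  by (rule degree_le) (simp add: coeff_poly_upto)

lemma coeff_pCons_1_1_mult_pderiv:
  "coeff ([:1, 1:] * pderiv p) k = of_nat (Suc k) * coeff p (Suc k) + of_nat k * coeff p k"
  by (cases k) (simp_all add: coeff_pderiv algebra_simps)

section \<open>Murphy's formula\<close>

definition legendre_coeff :: "nat \<Rightarrow> nat \<Rightarrow> complex" where
  "legendre_coeff n k = (-1)^k * fact (2*n - 2*k) / (2^n * fact k * fact (n - k) * fact (n - 2*k))"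

lemma legendreP_altdef: "legendreP n z = (\<Sum>k\<le>n div 2. legendre_coeff n k * z^(n - 2*k))"
  by (simp add: legendreP_def legendre_coeff_def)

lemma legendreP_minus: "legendreP n (-z) = (-1)^n * legendreP n z"
  unfolding legendreP_altdef sum_distrib_left
proof (rule sum.cong)
  fix k assume "k \<in> {..n div 2}"
  then have "n = (n - 2*k) + 2*k" by auto
  then have "(-1::complex)^n = (-1)^(n - 2*k) * ((-1)^2)^k" by (metis power_add power_mult)
  then have "(-1::complex)^n = (-1)^(n - 2*k)" by simp
  then show "legendre_coeff n k * (-z)^(n - 2*k) = (-1)^n * (legendre_coeff n k * z^(n - 2*k))"
    by (simp add: power_minus[of z])
qed simp

lemma legendre_coeff_Suc:
  assumes "n = j + 2 * Suc i"
  shows "of_nat ((j+1)*(j+2)) * legendre_coeff n i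
       + of_nat (2 * Suc i * (2*j + 2*i + 3)) * legendre_coeff n (Suc i) = 0"
proof -
  have "2*n - 2*i = Suc (Suc (2*j+2*i+2))" "n - i = Suc (Suc (j+i))" "n - 2*i = Suc (Suc j)"
    "2*n - 2*Suc i = 2*j+2*i+2" "n - Suc i = Suc (j+i)" "n - 2*Suc i = j" using assms by auto
  then show ?thesis
    by (simp only: legendre_coeff_def fact_Suc_complex power_Suc)
       (simp add: field_simps del: of_nat_add of_nat_Suc; simp add: algebra_simps)
qed

definition legendre_op :: "nat \<Rightarrow> complex poly \<Rightarrow> complex poly" where
  "legendre_op n p
     = [:1,0,-1:] * pderiv (pderiv p) - [:0,2:] * pderiv p + smult (of_nat (n*(n+1))) p"

text \<open>The Legendre operator in the variable x = (z - 1)/2.\<close>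

definition legendre_op_shifted :: "nat \<Rightarrow> complex poly \<Rightarrow> complex poly" where
  "legendre_op_shifted n q
     = [:0,-1,-1:] * pderiv (pderiv q) - [:1,2:] * pderiv q + smult (of_nat (n*(n+1))) q"

lemma coeff_legendre_op:
  "coeff (legendre_op n p) j = of_nat ((j+1)*(j+2)) * coeff p (j+2)
     + (of_nat (n*(n+1)) - of_nat (j*(j+1))) * coeff p j"
  unfolding legendre_op_def
  by (cases j; cases "j - 1") (auto simp: coeff_pderiv algebra_simps)

lemma coeff_legendre_op_shifted:
  "coeff (legendre_op_shifted n q) k = - (of_nat (Suc k) * of_nat (Suc k)) * coeff q (Suc k)
     + (of_nat (n*(n+1)) - of_nat (k*(k+1))) * coeff q k"
  unfolding legendre_op_shifted_def
  by (cases k; cases "k - 1") (auto simp: coeff_pderiv algebra_simps)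

lemma legendre_op_diff: "legendre_op n (p - q) = legendre_op n p - legendre_op n q"
  by (simp add: legendre_op_def pderiv_diff smult_diff_right algebra_simps)

lemma legendre_op_pcompose:
  "legendre_op n (q \<circ>\<^sub>p [:-(1/2), 1/2:]) = legendre_op_shifted n q \<circ>\<^sub>p [:-(1/2), 1/2:]"
proof -
  define X :: "complex poly" where "X = [:-(1/2), 1/2:]"
  have X: "poly X z = (z - 1)/2" for z by (simp add: X_def field_simps)
  have d: "pderiv (p \<circ>\<^sub>p X) = smult (1/2) (pderiv p \<circ>\<^sub>p X)" for p :: "complex poly"
    by (simp add: X_def pderiv_pcompose pderiv_pCons)
  have "poly (legendre_op n (q \<circ>\<^sub>p X)) z = poly (legendre_op_shifted n q \<circ>\<^sub>p X) z" for z
    by (simp add: legendre_op_def legendre_op_shifted_def d pderiv_smult poly_pcompose X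
        algebra_simps power2_eq_square) (simp add: field_simps)
  then have "poly (legendre_op n (q \<circ>\<^sub>p X)) = poly (legendre_op_shifted n q \<circ>\<^sub>p X)" ..
  then show ?thesis by (simp add: poly_eq_poly_eq_iff X_def)
qed

lemma legendre_op_eq_0_imp_eq_0:
  assumes "legendre_op n p = 0" "degree p \<le> n" "coeff p n = 0"
  shows "p = 0"
proof (rule ccontr)
  assume "p \<noteq> 0"
  define j where "j = degree p"
  have lc: "coeff p j \<noteq> 0" using \<open>p \<noteq> 0\<close> unfolding j_def by simp
  with assms(2,3) have "j < n" unfolding j_def by (cases "degree p = n") auto
  then have "j*(j+1) < n*(n+1)" by (intro mult_strict_mono) auto
  then have "(of_nat (n*(n+1)) - of_nat (j*(j+1)) :: complex) \<noteq> 0"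
    by (metis eq_iff_diff_eq_0 less_irrefl of_nat_eq_iff)
  moreover have "coeff p (j+2) = 0" unfolding j_def by (rule coeff_eq_0) simp
  ultimately have "coeff (legendre_op n p) j \<noteq> 0" using lc by (simp add: coeff_legendre_op)
  with assms(1) show False by simp
qed

definition legendre_monomial_coeff :: "nat \<Rightarrow> nat \<Rightarrow> complex" where
  "legendre_monomial_coeff n j = (if even (n - j) then legendre_coeff n ((n - j) div 2) else 0)"

lemma poly_legendre_monomial_coeff:
  "poly (poly_upto (legendre_monomial_coeff n) n) z = legendreP n z"
proof -
  have inj: "inj_on (\<lambda>k. n - 2*k) {..n div 2}" by (auto simp: inj_on_def)
  have "(\<Sum>j\<le>n. legendre_monomial_coeff n j * z^j)
      = (\<Sum>j\<in>(\<lambda>k. n - 2*k) ` {..n div 2}. legendre_monomial_coeff n j * z^j)"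
  proof (rule sum.mono_neutral_right)
    show "\<forall>j\<in>{..n} - (\<lambda>k. n - 2*k) ` {..n div 2}. legendre_monomial_coeff n j * z^j = 0"
    proof
      fix j assume j: "j \<in> {..n} - (\<lambda>k. n - 2*k) ` {..n div 2}"
      have "odd (n - j)"
      proof
        assume "even (n - j)"
        then obtain q where "n - j = 2*q" by blast
        with j have "q \<in> {..n div 2}" "j = n - 2*q" by auto
        with j show False by blast
      qed
      then show "legendre_monomial_coeff n j * z^j = 0" by (simp add: legendre_monomial_coeff_def)
    qed
  qed auto
  also have "\<dots> = legendreP n z"
    unfolding legendreP_altdef sum.reindex[OF inj] o_def
    by (rule sum.cong) (auto simp: legendre_monomial_coeff_def)
  finally show ?thesis by (simp add: poly_poly_upto)
qed

lemma legendre_op_legendre: "legendre_op n (poly_upto (legendre_monomial_coeff n) n) = 0"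
proof (rule poly_eqI)
  fix j
  show "coeff (legendre_op n (poly_upto (legendre_monomial_coeff n) n)) j = coeff 0 j"
  proof (cases "j + 2 \<le> n \<and> even (n - j)")
    case True
    then obtain q where "n - j = 2*q" by blast
    with True have "n = j + 2 * Suc (q - 1)" by simp
    then obtain i where n: "n = j + 2 * Suc i" by blast
    have "of_nat (n*(n+1)) - of_nat (j*(j+1)) = (of_nat (2 * Suc i * (2*j + 2*i + 3)) :: complex)"
      by (simp add: n algebra_simps)
    moreover have "coeff (poly_upto (legendre_monomial_coeff n) n) (j+2) = legendre_coeff n i"
      "coeff (poly_upto (legendre_monomial_coeff n) n) j = legendre_coeff n (Suc i)"
      by (simp_all add: coeff_poly_upto legendre_monomial_coeff_def n)
    ultimately show ?thesis
      by (simp only: coeff_legendre_op legendre_coeff_Suc[OF n] coeff_0)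
  next
    case False
    then have "odd (n - j) \<or> j = n \<or> n < j" by presburger
    then show ?thesis
      by (elim disjE) (auto simp: coeff_legendre_op coeff_poly_upto legendre_monomial_coeff_def)
  qed
qed

text \<open>
  murphy_poly n 0 is the polynomial of Murphy's formula
  P_n(z) = \<Sum>k\<le>n. (n+k)!/(k!^2 (n-k)!) ((z-1)/2)^k; for general m its coefficients are those
  of the last sum of the theorem without the digamma factors.
\<close>

definition murphy_coeff :: "nat \<Rightarrow> nat \<Rightarrow> nat \<Rightarrow> complex" where
  "murphy_coeff n m k = fact (k + n) / (fact k * fact (k + m) * fact (n - k))"

definition murphy_poly :: "nat \<Rightarrow> nat \<Rightarrow> complex poly" where
  "murphy_poly n m = poly_upto (murphy_coeff n m) n"

lemma coeff_murphy_poly_Suc: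
  "of_nat (k + 1) * of_nat (k + m + 1) * coeff (murphy_poly n m) (Suc k)
     = of_nat (k + n + 1) * of_nat (n - k) * coeff (murphy_poly n m) k"
proof (cases "k < n")
  case True
  then have "n - k = Suc (n - Suc k)" by simp
  then have "(fact (n - k) :: complex) = of_nat (n - k) * fact (n - Suc k)"
    by (simp only: fact_Suc_complex) simp
  moreover have "Suc k + n = Suc (k + n)" "Suc k + m = Suc (k + m)" by simp_all
  ultimately show ?thesis using True
    by (simp only: murphy_poly_def coeff_poly_upto murphy_coeff_def fact_Suc_complex if_True Suc_leI)
       (simp add: field_simps del: of_nat_add of_nat_Suc)
qed (simp add: murphy_poly_def coeff_poly_upto)

lemma coeff_murphy_poly_Suc_param:
  "of_nat (k + m + 1) * coeff (murphy_poly n (Suc m)) k = coeff (murphy_poly n m) k"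
proof -
  have "k + Suc m = Suc (k + m)" by simp
  then show ?thesis
    by (simp only: murphy_poly_def coeff_poly_upto murphy_coeff_def fact_Suc_complex)
       (simp add: field_simps del: of_nat_add of_nat_Suc)
qed

lemma legendre_op_shifted_murphy_poly: "legendre_op_shifted n (murphy_poly n 0) = 0"
proof (rule poly_eqI)
  fix k
  have "of_nat (Suc k) * of_nat (Suc k) * coeff (murphy_poly n 0) (Suc k)
      = (of_nat (n*(n+1)) - of_nat (k*(k+1))) * coeff (murphy_poly n 0) k"
  proof (cases "k \<le> n")
    case True
    then have "of_nat (k + n + 1) * of_nat (n - k) = (of_nat (n*(n+1)) - of_nat (k*(k+1)) :: complex)"
      by (simp add: algebra_simps)
    with coeff_murphy_poly_Suc[of k 0 n] show ?thesis by simp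
  qed (simp add: murphy_poly_def coeff_poly_upto)
  then show "coeff (legendre_op_shifted n (murphy_poly n 0)) k = coeff 0 k"
    by (simp add: coeff_legendre_op_shifted)
qed

text \<open>
  Both sides are polynomial solutions of the Legendre equation with the same coefficient of z^n.
\<close>

lemma legendreP_murphy: "legendreP n z = poly (murphy_poly n 0) ((z - 1)/2)"
proof -
  define M where "M = murphy_poly n 0 \<circ>\<^sub>p [:-(1/2), 1/2:]"
  define L where "L = poly_upto (legendre_monomial_coeff n) n"
  have deg: "degree (murphy_poly n 0) = n"
    using degree_poly_upto[of "murphy_coeff n 0" n]
    by (intro antisym le_degree) (simp_all add: murphy_poly_def coeff_poly_upto murphy_coeff_def)
  then have degM: "degree M = n" by (simp add: M_def degree_pcompose)
  have "coeff M n = coeff (murphy_poly n 0) n * (1/2)^n"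
    using lead_coeff_comp[of "[:-(1/2), 1/2:]" "murphy_poly n 0"] deg degM unfolding M_def[symmetric]
    by simp
  also have "\<dots> = coeff L n"
    by (simp add: L_def murphy_poly_def coeff_poly_upto murphy_coeff_def legendre_monomial_coeff_def
        legendre_coeff_def mult_2_right field_simps)
  finally have "coeff (L - M) n = 0" by simp
  moreover have "legendre_op n (L - M) = 0"
    by (simp add: legendre_op_diff L_def legendre_op_legendre M_def legendre_op_pcompose
        legendre_op_shifted_murphy_poly)
  moreover have "degree (L - M) \<le> n"
    using degree_diff_le[OF degree_poly_upto degM[THEN eq_imp_le]] by (simp add: L_def)
  ultimately have "L - M = 0" by (rule legendre_op_eq_0_imp_eq_0[rotated 2])
  then show ?thesis
    by (simp add: poly_legendre_monomial_coeff[symmetric] L_def M_def poly_pcompose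
        diff_divide_distrib)
qed

lemma legendreP_murphy_sign:
  assumes "e * e = 1"
  shows "legendreP n z = e^n * poly (murphy_poly n 0) ((e*z - 1)/2)"
proof -
  have "e = 1 \<or> e = -1" using assms by (simp add: square_eq_1_iff)
  then show ?thesis
  proof
    assume "e = -1"
    then show ?thesis using legendreP_minus[of n "-z"] legendreP_murphy[of n "-z"] by simp
  qed (simp add: legendreP_murphy)
qed

section \<open>Recurrences in m\<close>

lemma coeff_murphy_poly_rec:
  assumes "m \<le> n"
  shows "of_nat (Suc k) * coeff (murphy_poly n m) (Suc k) + of_nat k * coeff (murphy_poly n m) k
           - of_nat m * coeff (murphy_poly n m) k
         = of_nat ((n+m+1)*(n-m)) * coeff (murphy_poly n (Suc m)) k"
proof -
  define c where "c = coeff (murphy_poly n m)"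
  define s :: complex where "s = of_nat (k + m + 1)"
  have "s \<noteq> 0" unfolding s_def by (metis of_nat_eq_0_iff add_eq_0_iff_both_eq_0 one_neq_zero)
  moreover have "s * (of_nat (Suc k) * c (Suc k) + of_nat k * c k - of_nat m * c k)
      = s * (of_nat ((n+m+1)*(n-m)) * coeff (murphy_poly n (Suc m)) k)"
  proof (cases "k \<le> n")
    case True
    have "of_nat (k + 1) * s * c (Suc k) = of_nat (k + n + 1) * of_nat (n - k) * c k"
      using coeff_murphy_poly_Suc[of k m n] by (simp only: c_def s_def)
    moreover have "s * coeff (murphy_poly n (Suc m)) k = c k"
      using coeff_murphy_poly_Suc_param[of k m n] by (simp only: c_def s_def)
    ultimately show ?thesis
      using True assms unfolding s_def
      by (simp only: of_nat_add of_nat_mult of_nat_diff of_nat_Suc of_nat_1) algebra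
  qed (simp add: c_def murphy_poly_def coeff_poly_upto)
  ultimately show ?thesis by (simp add: c_def)
qed

lemma murphy_poly_rec:
  assumes "m \<le> n"
  shows "[:1, 1:] * pderiv (murphy_poly n m) - smult (of_nat m) (murphy_poly n m)
           = smult (of_nat ((n+m+1)*(n-m))) (murphy_poly n (Suc m))"
  by (rule poly_eqI)
     (simp only: coeff_diff coeff_smult coeff_pCons_1_1_mult_pderiv coeff_murphy_poly_rec[OF assms])

definition murphy_digamma_poly :: "nat \<Rightarrow> nat \<Rightarrow> complex poly" where
  "murphy_digamma_poly n m = poly_upto (\<lambda>k. murphy_coeff n m k * Digamma (of_nat (k + m + 1))) n"

lemma coeff_murphy_digamma_poly:
  "coeff (murphy_digamma_poly n m) k = coeff (murphy_poly n m) k * Digamma (of_nat (k + m + 1))"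
  by (simp add: murphy_digamma_poly_def murphy_poly_def coeff_poly_upto)

lemma murphy_digamma_poly_rec:
  assumes "m \<le> n"
  shows "[:1, 1:] * pderiv (murphy_digamma_poly n m) - smult (of_nat m) (murphy_digamma_poly n m)
           = smult (of_nat ((n+m+1)*(n-m))) (murphy_digamma_poly n (Suc m))
             - murphy_poly n m + smult (of_nat (2*m+1)) (murphy_poly n (Suc m))"
proof (rule poly_eqI)
  fix k
  define c where "c = coeff (murphy_poly n m)"
  define d where "d = coeff (murphy_poly n (Suc m)) k"
  define s :: complex where "s = of_nat (k + m + 1)"
  have "s \<noteq> 0" unfolding s_def by (metis of_nat_eq_0_iff add_eq_0_iff_both_eq_0 one_neq_zero)
  then have s: "s * inverse s = 1" by simp
  have "Digamma (s + 1) = Digamma s + inverse s"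
    using Digamma_plus1[OF \<open>s \<noteq> 0\<close>] by (simp add: divide_inverse)
  moreover have "of_nat (Suc k + m + 1) = s + 1" "of_nat (k + Suc m + 1) = s + 1"
    by (simp_all add: s_def)
  ultimately have \<psi>: "Digamma (of_nat (Suc k + m + 1)) = Digamma s + inverse s"
    "Digamma (of_nat (k + Suc m + 1)) = Digamma s + inverse s" by (simp_all only:)
  have R: "of_nat (Suc k) * c (Suc k) + of_nat k * c k - of_nat m * c k
      = of_nat ((n+m+1)*(n-m)) * d"
    using coeff_murphy_poly_rec[OF assms] by (simp only: c_def d_def)
  have sd: "s * d = c k"
    using coeff_murphy_poly_Suc_param[of k m n] by (simp only: c_def d_def s_def)
  have "s = of_nat k + of_nat m + 1" "(of_nat (2*m+1) :: complex) = 2 * of_nat m + 1"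
    by (simp_all add: s_def)
  with R sd s show "coeff ([:1, 1:] * pderiv (murphy_digamma_poly n m)
        - smult (of_nat m) (murphy_digamma_poly n m)) k
      = coeff (smult (of_nat ((n+m+1)*(n-m))) (murphy_digamma_poly n (Suc m))
        - murphy_poly n m + smult (of_nat (2*m+1)) (murphy_poly n (Suc m))) k"
    unfolding coeff_diff coeff_add coeff_smult coeff_pCons_1_1_mult_pderiv coeff_murphy_digamma_poly
      c_def[symmetric] d_def[symmetric] s_def[symmetric] \<psi>
    by algebra
qed

definition shifted_digamma_coeff :: "nat \<Rightarrow> nat \<Rightarrow> nat \<Rightarrow> complex" where
  "shifted_digamma_coeff n m k
     = fact (k + n + m) * Digamma (of_nat (k + m + 1)) / (fact k * fact (k + m) * fact (n - m - k))"

definition shifted_digamma_poly :: "nat \<Rightarrow> nat \<Rightarrow> complex poly" where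
  "shifted_digamma_poly n m = poly_upto (shifted_digamma_coeff n m) (n - m)"

lemma pderiv_shifted_digamma_poly:
  assumes "m < n"
  shows "pderiv (shifted_digamma_poly n m) = shifted_digamma_poly n (Suc m)"
proof (rule poly_eqI)
  fix j
  show "coeff (pderiv (shifted_digamma_poly n m)) j = coeff (shifted_digamma_poly n (Suc m)) j"
  proof (cases "Suc j \<le> n - m")
    case True
    have "Suc j + n + m = j + n + Suc m" "Suc j + m = j + Suc m" "n - m - Suc j = n - Suc m - j" by auto
    then have "of_nat (Suc j) * shifted_digamma_coeff n m (Suc j) = shifted_digamma_coeff n (Suc m) j"
      by (simp only: shifted_digamma_coeff_def fact_Suc_complex)
         (simp add: field_simps del: of_nat_add of_nat_Suc)
    with True show ?thesis by (simp add: coeff_pderiv shifted_digamma_poly_def coeff_poly_upto)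
  qed (use assms in \<open>simp add: coeff_pderiv shifted_digamma_poly_def coeff_poly_upto\<close>)
qed

definition digamma_comb :: "nat \<Rightarrow> nat \<Rightarrow> complex" where
  "digamma_comb n m
     = Digamma (of_nat (n + m + 1)) - 2 * Digamma (of_nat (n + 1)) + Digamma (of_nat (n - m + 1))"

lemma digamma_comb_Suc:
  assumes "m < n"
  shows "digamma_comb n (Suc m) = digamma_comb n m - of_nat (2*m + 1) / of_nat ((n+m+1)*(n-m))"
proof -
  define a :: complex where "a = of_nat (n + m + 1)"
  define b :: complex where "b = of_nat (n - m)"
  have "a \<noteq> 0" "b \<noteq> 0" unfolding a_def b_def of_nat_eq_0_iff using assms by simp_all
  then have \<psi>: "Digamma (a + 1) = Digamma a + 1/a" "Digamma (b + 1) = Digamma b + 1/b"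
    by (simp_all add: Digamma_plus1)
  have "of_nat (n + Suc m + 1) = a + 1" "of_nat (n - Suc m + 1) = b" "of_nat (n - m + 1) = b + 1"
    "of_nat (2*m + 1) = a - b"
    using assms by (simp_all add: a_def b_def)
  moreover have "of_nat ((n+m+1)*(n-m)) = a * b" by (simp only: a_def b_def of_nat_mult)
  ultimately show ?thesis using \<open>a \<noteq> 0\<close> \<open>b \<noteq> 0\<close>
    unfolding digamma_comb_def a_def[symmetric] by (simp only: \<psi>) (simp add: field_simps)
qed

lemma has_field_derivative_poly_affine:
  "((\<lambda>z. poly p ((e*z - 1)/2)) has_field_derivative poly (pderiv p) ((e*z - 1)/2) * (e/2)) (at z)"
proof -
  have "((\<lambda>z. (e*z - 1)/2) has_field_derivative e/2) (at z)"
    by (rule derivative_eq_intros refl | simp)+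
  then show ?thesis by (rule DERIV_chain2[OF poly_DERIV])
qed

text \<open>
  For e * e = 1 the argument (e z - 1)/2 equals e (z - e)/2, the variable of the sums in the theorem.
\<close>

definition murphy_frac :: "complex \<Rightarrow> nat \<Rightarrow> complex poly \<Rightarrow> complex \<Rightarrow> complex" where
  "murphy_frac e m p z = poly p ((e*z - 1)/2) / (z + e)^m"

lemma murphy_frac_add: "murphy_frac e m (p + q) z = murphy_frac e m p z + murphy_frac e m q z"
  by (simp add: murphy_frac_def add_divide_distrib)

lemma murphy_frac_diff: "murphy_frac e m (p - q) z = murphy_frac e m p z - murphy_frac e m q z"
  by (simp add: murphy_frac_def diff_divide_distrib)

lemma murphy_frac_smult: "murphy_frac e m (smult c p) z = c * murphy_frac e m p z"
  by (simp add: murphy_frac_def)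

lemma murphy_frac_Suc: "z + e \<noteq> 0 \<Longrightarrow> murphy_frac e (Suc m) p z = murphy_frac e m p z / (z + e)"
  by (simp add: murphy_frac_def field_simps)

lemma has_field_derivative_murphy_frac:
  assumes "e * e = 1" "z + e \<noteq> 0"
  shows "(murphy_frac e m p has_field_derivative
           murphy_frac e (Suc m) ([:1, 1:] * pderiv p - smult (of_nat m) p) z) (at z)"
proof -
  define y where "y = (e*z - 1)/2"
  define W where "W = z + e"
  have "W \<noteq> 0" using assms(2) by (simp add: W_def)
  have "((\<lambda>z. (z + e)^m) has_field_derivative of_nat m * W^(m - 1)) (at z)"
    unfolding W_def by (rule derivative_eq_intros refl | simp)+
  then have D: "(murphy_frac e m p has_field_derivative
      (poly (pderiv p) y * (e/2) * W^m - poly p y * (of_nat m * W^(m - 1))) / (W^m * W^m)) (at z)"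
    unfolding murphy_frac_def y_def W_def
    by (intro DERIV_divide has_field_derivative_poly_affine) (use assms(2) in auto)
  have "(poly (pderiv p) y * (e/2) * W^m - poly p y * (of_nat m * W^(m - 1))) / (W^m * W^m)
      = (poly (pderiv p) y * (e/2 * W) - of_nat m * poly p y) / W^Suc m"
    using \<open>W \<noteq> 0\<close> by (cases m) (simp_all add: field_simps)
  also have "e/2 * W = y + 1" using assms(1) by (simp add: y_def W_def field_simps)
  also have "(poly (pderiv p) y * (y + 1) - of_nat m * poly p y) / W^Suc m
      = murphy_frac e (Suc m) ([:1, 1:] * pderiv p - smult (of_nat m) p) z"
    unfolding murphy_frac_def y_def[symmetric] W_def[symmetric] by (simp add: algebra_simps)
  finally show ?thesis using D by simp
qed

definition fact_ratio :: "nat \<Rightarrow> nat \<Rightarrow> complex" where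
  "fact_ratio n m = fact (n + m) / fact (n - m)"

lemma fact_ratio_Suc:
  assumes "m < n"
  shows "fact_ratio n (Suc m) = fact_ratio n m * of_nat ((n+m+1)*(n-m))"
proof -
  have "n + Suc m = Suc (n + m)" and nm: "n - m = Suc (n - Suc m)" using assms by auto
  moreover have "(of_nat ((n+m+1)*(n-m)) :: complex) = of_nat (n + m + 1) * of_nat (n - Suc m + 1)"
    by (simp only: nm of_nat_mult Suc_eq_plus1)
  ultimately show ?thesis
    by (simp only: fact_ratio_def fact_Suc_complex) (simp add: field_simps del: of_nat_add of_nat_Suc)
qed

lemma has_field_derivative_murphy_legendre:
  assumes "m \<le> n" "e * e = 1" "z + e \<noteq> 0"
  shows "((\<lambda>z. e^n * fact_ratio n m * murphy_frac e m (murphy_poly n m) z) has_field_derivative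
           e^n * fact_ratio n m * of_nat ((n+m+1)*(n-m))
             * murphy_frac e (Suc m) (murphy_poly n (Suc m)) z) (at z)"
proof -
  have "((\<lambda>z. e^n * fact_ratio n m * murphy_frac e m (murphy_poly n m) z) has_field_derivative
      e^n * fact_ratio n m * murphy_frac e (Suc m)
        ([:1, 1:] * pderiv (murphy_poly n m) - smult (of_nat m) (murphy_poly n m)) z) (at z)"
    by (intro DERIV_cmult has_field_derivative_murphy_frac assms)
  then show ?thesis by (simp only: murphy_poly_rec[OF assms(1)] murphy_frac_smult mult.assoc)
qed

lemma legendre_deriv_murphy:
  assumes "m \<le> n" "e * e = 1" "z + e \<noteq> 0"
  shows "legendre_deriv n m z = e^n * fact_ratio n m * murphy_frac e m (murphy_poly n m) z"
  using assms(1,3)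
proof (induction m arbitrary: z)
  case 0
  then show ?case
    by (simp add: legendre_deriv_0 legendreP_murphy_sign[OF assms(2)] fact_ratio_def murphy_frac_def)
next
  case (Suc m)
  have "m < n" using Suc.prems(1) by simp
  have S: "open (- {-e})" "z \<in> - {-e}" using Suc.prems(2) by (auto simp: add_eq_0_iff)
  have "legendre_deriv n m w = e^n * fact_ratio n m * murphy_frac e m (murphy_poly n m) w"
    if "w \<in> - {-e}" for w
    using Suc.IH[of w] \<open>m < n\<close> that by (simp add: add_eq_0_iff2)
  then have "((\<lambda>w. e^n * fact_ratio n m * murphy_frac e m (murphy_poly n m) w)
      has_field_derivative legendre_deriv n (Suc m) z) (at z)"
    by (rule has_field_derivative_transform_within_open
        [OF has_field_derivative_legendre_deriv[OF \<open>m < n\<close>] S])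
  then have "legendre_deriv n (Suc m) z = e^n * fact_ratio n m * of_nat ((n+m+1)*(n-m))
      * murphy_frac e (Suc m) (murphy_poly n (Suc m)) z"
    using has_field_derivative_murphy_legendre[OF less_imp_le[OF \<open>m < n\<close>] assms(2) Suc.prems(2)]
    by (rule DERIV_unique)
  then show ?case by (simp only: fact_ratio_Suc[OF \<open>m < n\<close>] mult.assoc)
qed

definition shifted_digamma_term :: "nat \<Rightarrow> complex \<Rightarrow> nat \<Rightarrow> complex \<Rightarrow> complex" where
  "shifted_digamma_term n e m z = e^(n+m) / 2^m * poly (shifted_digamma_poly n m) ((e*z - 1)/2)"

definition murphy_digamma_term :: "nat \<Rightarrow> complex \<Rightarrow> nat \<Rightarrow> complex \<Rightarrow> complex" where
  "murphy_digamma_term n e m z = e^n * fact_ratio n m * murphy_frac e m (murphy_digamma_poly n m) z"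

lemma has_field_derivative_shifted_digamma_term:
  assumes "m < n"
  shows "(shifted_digamma_term n e m has_field_derivative shifted_digamma_term n e (Suc m) z) (at z)"
proof -
  have "(shifted_digamma_term n e m has_field_derivative
      e^(n+m) / 2^m * (poly (pderiv (shifted_digamma_poly n m)) ((e*z - 1)/2) * (e/2))) (at z)"
    unfolding shifted_digamma_term_def[abs_def] by (intro DERIV_cmult has_field_derivative_poly_affine)
  then show ?thesis
    by (simp add: shifted_digamma_term_def pderiv_shifted_digamma_poly[OF assms] mult_ac)
qed

lemma has_field_derivative_murphy_digamma_term:
  assumes "m < n" "e * e = 1" "z + e \<noteq> 0"
  shows "(murphy_digamma_term n e m has_field_derivative murphy_digamma_term n e (Suc m) z
           - legendre_deriv n m z / (z + e)
           + of_nat (2*m + 1) / of_nat ((n+m+1)*(n-m)) * legendre_deriv n (Suc m) z) (at z)"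
proof -
  define K where "K = e^n * fact_ratio n m"
  define Q :: complex where "Q = of_nat ((n+m+1)*(n-m))"
  have "Q \<noteq> 0" using assms(1) unfolding Q_def of_nat_eq_0_iff by simp
  have "(murphy_digamma_term n e m has_field_derivative K * murphy_frac e (Suc m)
      ([:1, 1:] * pderiv (murphy_digamma_poly n m) - smult (of_nat m) (murphy_digamma_poly n m)) z)
      (at z)"
    unfolding murphy_digamma_term_def[abs_def] K_def
    by (intro DERIV_cmult has_field_derivative_murphy_frac assms)
  also have "K * murphy_frac e (Suc m)
      ([:1, 1:] * pderiv (murphy_digamma_poly n m) - smult (of_nat m) (murphy_digamma_poly n m)) z
    = K * Q * murphy_frac e (Suc m) (murphy_digamma_poly n (Suc m)) z
      - K * murphy_frac e m (murphy_poly n m) z / (z + e)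
      + of_nat (2*m + 1) / Q * (K * Q * murphy_frac e (Suc m) (murphy_poly n (Suc m)) z)"
    unfolding murphy_digamma_poly_rec[OF less_imp_le[OF assms(1)]] murphy_frac_add murphy_frac_diff
      murphy_frac_smult murphy_frac_Suc[OF assms(3), of m "murphy_poly n m"] Q_def[symmetric]
    using \<open>Q \<noteq> 0\<close> by (simp add: field_simps)
  also have "\<dots> = murphy_digamma_term n e (Suc m) z - legendre_deriv n m z / (z + e)
      + of_nat (2*m + 1) / of_nat ((n+m+1)*(n-m)) * legendre_deriv n (Suc m) z"
    using legendre_deriv_murphy[of m n e z] legendre_deriv_murphy[of "Suc m" n e z] assms
    by (simp add: murphy_digamma_term_def K_def Q_def fact_ratio_Suc mult.assoc)
  finally show ?thesis .
qed

text \<open>The right-hand side of the theorem, term by term.\<close>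

definition legendre_log_deriv :: "nat \<Rightarrow> complex \<Rightarrow> nat \<Rightarrow> complex \<Rightarrow> complex" where
  "legendre_log_deriv n e m z
     = legendre_deriv n m z * Ln (z + e) - digamma_comb n m * legendre_deriv n m z
       - shifted_digamma_term n e m z + murphy_digamma_term n e m z"

lemma legendre_log_deriv_0: "legendre_log_deriv n e 0 z = legendreP n z * Ln (z + e)"
proof -
  have "shifted_digamma_poly n 0 = murphy_digamma_poly n 0"
    unfolding shifted_digamma_poly_def murphy_digamma_poly_def diff_zero
    by (rule arg_cong[where f = "\<lambda>c. poly_upto c n"])
       (simp add: fun_eq_iff shifted_digamma_coeff_def murphy_coeff_def)
  then show ?thesis
    by (simp add: legendre_log_deriv_def legendre_deriv_0 digamma_comb_def shifted_digamma_term_def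
        murphy_digamma_term_def fact_ratio_def murphy_frac_def)
qed

text \<open>
  Differentiating the logarithm produces legendre_deriv n m z / (z + e), which cancels against a
  term of the derivative of murphy_digamma_term; the other new term turns digamma_comb n m into
  digamma_comb n (Suc m).
\<close>

lemma has_field_derivative_legendre_log_deriv:
  assumes "m < n" "e * e = 1" "z + e \<notin> \<real>\<^sub>\<le>\<^sub>0"
  shows "(legendre_log_deriv n e m has_field_derivative legendre_log_deriv n e (Suc m) z) (at z)"
proof -
  have "z + e \<noteq> 0" using assms(3) by auto
  have Ln: "((\<lambda>z. Ln (z + e)) has_field_derivative inverse (z + e)) (at z)"
    using DERIV_chain2[OF has_field_derivative_Ln[OF assms(3)] DERIV_add[OF DERIV_ident DERIV_const]]
    by simp
  have "(legendre_log_deriv n e m has_field_derivative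
      legendre_deriv n (Suc m) z * Ln (z + e) + inverse (z + e) * legendre_deriv n m z
      - digamma_comb n m * legendre_deriv n (Suc m) z - shifted_digamma_term n e (Suc m) z
      + (murphy_digamma_term n e (Suc m) z - legendre_deriv n m z / (z + e)
        + of_nat (2*m + 1) / of_nat ((n+m+1)*(n-m)) * legendre_deriv n (Suc m) z)) (at z)"
    unfolding legendre_log_deriv_def[abs_def]
    by (intro DERIV_add DERIV_diff DERIV_mult DERIV_cmult Ln has_field_derivative_legendre_deriv
        has_field_derivative_shifted_digamma_term has_field_derivative_murphy_digamma_term
        assms \<open>z + e \<noteq> 0\<close>)
  then show ?thesis
    by (simp add: legendre_log_deriv_def digamma_comb_Suc[OF assms(1)] divide_inverse algebra_simps)
qed

lemma add_sign_notin_nonpos_Reals: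
  assumes "z \<notin> complex_of_real ` {..1}" "e * e = 1"
  shows "z + e \<notin> \<real>\<^sub>\<le>\<^sub>0"
proof
  assume "z + e \<in> \<real>\<^sub>\<le>\<^sub>0"
  moreover have "e = 1 \<or> e = -1" using assms(2) by (simp add: square_eq_1_iff)
  ultimately have "Im z = 0" "Re z \<le> 1" by (auto simp: complex_nonpos_Reals_iff)
  then have "z \<in> complex_of_real ` {..1}"
    by (intro image_eqI[of _ _ "Re z"]) (auto simp: complex_eq_iff)
  with assms(1) show False ..
qed

lemma higher_deriv_legendre_log:
  assumes "m \<le> n" "e * e = 1" "z \<notin> complex_of_real ` {..1}"
  shows "(deriv ^^ m) (\<lambda>w. legendreP n w * Ln (w + e)) z = legendre_log_deriv n e m z"
  using assms(1,3)
proof (induction m arbitrary: z)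
  case 0
  then show ?case by (simp add: legendre_log_deriv_0)
next
  case (Suc m)
  have "(legendre_log_deriv n e m has_field_derivative legendre_log_deriv n e (Suc m) z) (at z)"
    using Suc.prems
    by (intro has_field_derivative_legendre_log_deriv add_sign_notin_nonpos_Reals assms) auto
  then have "((deriv ^^ m) (\<lambda>w. legendreP n w * Ln (w + e)) has_field_derivative
      legendre_log_deriv n e (Suc m) z) (at z)"
    by (rule has_field_derivative_transform_within_open[OF _ open_Compl[OF closed_slot_left]])
       (use Suc in auto)
  then show ?case by (simp add: DERIV_imp_deriv)
qed

theorem mainTheorem2:
  fixes m n :: nat and \<epsilon> :: int and z :: complex
  assumes "m \<le> n"
    and "\<epsilon> \<in> {1, -1}"
    and "z \<notin> complex_of_real ` {..1}"
  shows "(deriv ^^ m) (\<lambda>w. legendreP n w * Ln (w + of_int \<epsilon>)) z =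
      of_nat (fact (2*m)) / (2^m * of_nat (fact m)) * gegenbauerC (n - m) (of_nat m + 1/2) z * Ln (z + of_int \<epsilon>)
    - of_nat (fact (2*m)) / (2^m * of_nat (fact m))
        * (Digamma (of_nat (n + m + 1)) - 2 * Digamma (of_nat (n + 1)) + Digamma (of_nat (n - m + 1)))
        * gegenbauerC (n - m) (of_nat m + 1/2) z
    - of_int \<epsilon> ^ (n + m) / 2^m * (\<Sum>k = 0..n - m. of_int \<epsilon> ^ k
        * of_nat (fact (k + n + m)) * Digamma (of_nat (k + m + 1))
        / (of_nat (fact k) * of_nat (fact (k + m)) * of_nat (fact (n - m - k)))
        * ((z - of_int \<epsilon>) / 2) ^ k)
    + of_int \<epsilon> ^ n * of_nat (fact (n + m)) / of_nat (fact (n - m)) / (z + of_int \<epsilon>) ^ m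
        * (\<Sum>k = 0..n. of_int \<epsilon> ^ k
        * of_nat (fact (k + n)) * Digamma (of_nat (k + m + 1))
        / (of_nat (fact k) * of_nat (fact (k + m)) * of_nat (fact (n - k)))
        * ((z - of_int \<epsilon>) / 2) ^ k)"
proof -
  define e :: complex where "e = of_int \<epsilon>"
  have "e * e = 1" using assms(2) by (auto simp: e_def)
  then have y: "(e*z - 1)/2 = e * ((z - e)/2)" by (simp add: field_simps)
  show ?thesis
    unfolding e_def[symmetric] higher_deriv_legendre_log[OF assms(1) \<open>e * e = 1\<close> assms(3)]
      legendre_log_deriv_def legendre_deriv_def digamma_comb_def shifted_digamma_term_def
      murphy_digamma_term_def fact_ratio_def murphy_frac_def y shifted_digamma_poly_def
      murphy_digamma_poly_def poly_poly_upto_scaled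
    by (simp add: shifted_digamma_coeff_def murphy_coeff_def mult_ac)
qed

end
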